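(* Let $q\in\mathbb{N}$, $p=4q$, and let $S=\{0,1,\ldots,p-1\}$. For $m,n\in S$ define $$g_p(m,n)=\mathbf{d}_{2q}\!\left(0,\ m+n\cdot(-1)^{\mathbf{d}_2(0,\frac{m}{2q})}+q\,\mathbf{d}_2\!\left(0,\tfrac{m}{2q}\right)\mathbf{d}_2\!\left(0,\tfrac{n}{2q}\right)\right)+2q\,\mathbf{d}_2\!\left(0,\ \mathbf{d}_2\!\left(0,\tfrac{m}{2q}\right)+\mathbf{d}_2\!\left(0,\tfrac{n}{2q}\right)\right).$$ Then $S$ under $g_p$ is a group isomorphic to the dicyclic group $Q_{4q}=\langle a,x\mid a^{2q}=1,\ x^2=a^q,\ xax^{-1}=a^{-1}\rangle$ of order $4q$ (nonabelian for $q\ge 2$).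
   Context: For an integer $p\ge 2$, an integer $k\ge 0$ and a real number $x$ (possibly negative), the digit function is $\mathbf{d}_p(k,x)=\lfloor x/p^k\rfloor-p\lfloor x/p^{k+1}\rfloor$. In particular $\mathbf{d}_{r}(0,y)$ for an integer $y$ is the residue of $y$ modulo $r$ in $\{0,\ldots,r-1\}$. *)

theory Defs
  imports Complex_Main "HOL-Algebra.Algebra"
begin

definition digit :: "nat \<Rightarrow> nat \<Rightarrow> real \<Rightarrow> int" where
  "digit p k x = \<lfloor>x / real p ^ k\<rfloor> - int p * \<lfloor>x / real p ^ (k + 1)\<rfloor>"

definition gp :: "nat \<Rightarrow> nat \<Rightarrow> nat \<Rightarrow> int" where
  "gp q m n =
     (let dm = digit 2 0 (real m / real (2 * q));
          dn = digit 2 0 (real n / real (2 * q))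
      in digit (2 * q) 0 (real_of_int (int m + int n * (-1) ^ nat dm + int q * dm * dn))
         + int (2 * q) * digit 2 0 (real_of_int (dm + dn)))"

definition Sgp :: "nat \<Rightarrow> nat monoid" where
  "Sgp q = \<lparr>carrier = {0..<4 * q}, monoid.mult = (\<lambda>m n. nat (gp q m n)), one = 0\<rparr>"

definition dicyclic_rels :: "('a, 'b) monoid_scheme \<Rightarrow> 'a \<Rightarrow> 'a \<Rightarrow> nat \<Rightarrow> bool" where
  "dicyclic_rels H a x q \<longleftrightarrow>
     a \<in> carrier H \<and> x \<in> carrier H \<and>
     a [^]\<^bsub>H\<^esub> (2 * q) = \<one>\<^bsub>H\<^esub> \<and>
     x [^]\<^bsub>H\<^esub> (2::nat) = a [^]\<^bsub>H\<^esub> q \<and>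
     x \<otimes>\<^bsub>H\<^esub> a \<otimes>\<^bsub>H\<^esub> inv\<^bsub>H\<^esub> x = inv\<^bsub>H\<^esub> a"

end

theory Submission
  imports Defs
begin

(* Write m < 4q as m = r + 2q d with r < 2q and d in {0, 1}, and read it as the normal form
   a^r x^d of the dicyclic group, with a = 1 and x = 2q.  In these coordinates g_p is exactly
   the multiplication of normal forms forced by the relations, so the group axioms reduce to
   congruences modulo 2q, a and x satisfy the relations and generate, and for elements b, y of
   any group satisfying the relations, a^r x^d |-> b^r y^d is a homomorphism because the words
   b^r y^d multiply by the same rule. *)

(* Since x a x^-1 = a^-1 and x^2 = a^q, for d1, d2 in {0, 1}
   (a^r1 x^d1) (a^r2 x^d2) = a^e x^((d1 + d2) mod 2),  e = dicyclic_exponent q r1 d1 r2 d2. *)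
definition dicyclic_exponent :: "nat \<Rightarrow> nat \<Rightarrow> nat \<Rightarrow> nat \<Rightarrow> nat \<Rightarrow> int" where
  "dicyclic_exponent q r1 d1 r2 d2 = (int r1 + (-1) ^ d1 * int r2 + int (q * d1 * d2)) mod int (2 * q)"

lemma digit_of_int: "0 < N \<Longrightarrow> digit N 0 (real_of_int z) = z mod int N"
proof -
  assume "0 < N"
  have "\<lfloor>real_of_int z / real N\<rfloor> = z div int N"
    by (metis floor_divide_of_int_eq of_int_of_nat_eq)
  then show ?thesis
    by (simp add: digit_def minus_div_mult_eq_mod [symmetric] mult.commute)
qed

lemma digit_two_div: "m < 2 * c \<Longrightarrow> digit 2 0 (real m / real c) = int (m div c)"
proof -
  assume m: "m < 2 * c"
  have "\<lfloor>real m / real c\<rfloor> = int (m div c)"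
    by (metis floor_divide_of_nat_eq of_int_of_nat_eq)
  moreover have "\<lfloor>real m / real c / 2\<rfloor> = 0"
    using m by (simp add: floor_eq_iff field_simps)
  ultimately show ?thesis by (simp add: digit_def)
qed

lemma gp_coords:
  assumes "0 < q" "r1 < 2 * q" "r2 < 2 * q" "d1 \<le> 1" "d2 \<le> 1"
  shows "gp q (r1 + 2 * q * d1) (r2 + 2 * q * d2)
    = dicyclic_exponent q r1 d1 r2 d2 + int (2 * q) * int ((d1 + d2) mod 2)"
proof -
  have quot: "digit 2 0 (real (r + 2 * q * d) / real (2 * q)) = int d" if "r < 2 * q" "d \<le> 1" for r d
    using that assms(1) by (subst digit_two_div) (auto simp: le_Suc_eq)
  have "d1 \<in> {0, 1}" "d2 \<in> {0, 1}" using assms by auto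
  then show ?thesis
    using assms unfolding gp_def Let_def dicyclic_exponent_def quot[OF assms(2,4)] quot[OF assms(3,5)]
    by (auto simp: digit_of_int zmod_int mod_simps mod_eq_dvd_iff simp del: of_int_add of_int_mult)
qed

lemma dicyclic_exponent_nonneg: "0 < q \<Longrightarrow> 0 \<le> dicyclic_exponent q r1 d1 r2 d2"
  by (simp add: dicyclic_exponent_def)

lemma nat_dicyclic_exponent_less: "0 < q \<Longrightarrow> nat (dicyclic_exponent q r1 d1 r2 d2) < 2 * q"
  by (simp add: dicyclic_exponent_def nat_less_iff)

lemma dicyclic_exponent_assoc:
  assumes "0 < q" "d1 \<le> 1" "d2 \<le> 1" "d3 \<le> 1"
  shows "dicyclic_exponent q (nat (dicyclic_exponent q r1 d1 r2 d2)) ((d1 + d2) mod 2) r3 d3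
       = dicyclic_exponent q r1 d1 (nat (dicyclic_exponent q r2 d2 r3 d3)) ((d2 + d3) mod 2)"
proof -
  let ?N = "int (2 * q)"
  have "dicyclic_exponent q (nat (dicyclic_exponent q r1 d1 r2 d2)) ((d1 + d2) mod 2) r3 d3
      = (int r1 + (-1) ^ d1 * int r2 + int (q * d1 * d2)
         + (-1) ^ ((d1 + d2) mod 2) * int r3 + int (q * ((d1 + d2) mod 2) * d3)) mod ?N"
    using dicyclic_exponent_nonneg[OF assms(1)] by (simp add: dicyclic_exponent_def mod_simps add.assoc)
  moreover have "dicyclic_exponent q r1 d1 (nat (dicyclic_exponent q r2 d2 r3 d3)) ((d2 + d3) mod 2)
      = (int r1 + (-1) ^ d1 * (int r2 + (-1) ^ d2 * int r3 + int (q * d2 * d3))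
         + int (q * d1 * ((d2 + d3) mod 2))) mod ?N"
    \<comment> \<open>the inner residue sits under the factor \<open>(-1) ^ d1\<close>, out of reach of \<open>mod_simps\<close>\<close>
    using dicyclic_exponent_nonneg[OF assms(1)] unfolding dicyclic_exponent_def
    by (simp, intro mod_add_cong mod_mult_cong refl) simp
  moreover have "d1 \<in> {0, 1}" "d2 \<in> {0, 1}" "d3 \<in> {0, 1}" using assms by auto
  ultimately show ?thesis
    by (auto simp: mod_eq_dvd_iff algebra_simps)
qed

lemma (in group) int_pow_mod_period:
  assumes "b \<in> carrier G" "b [^] n = \<one>"
  shows "b [^] (k mod int n) = b [^] (k::int)"
proof -
  have "ord b dvd n" using assms pow_eq_id by blast
  then have "int (ord b) dvd k - k mod int n"
    by (meson dvd_minus_mod dvd_trans int_dvd_int_iff)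
  then show ?thesis using assms(1) int_pow_eq by blast
qed

lemma (in group) dicyclic_rels_conj:
  assumes "dicyclic_rels G b y q"
  shows "y \<otimes> b = inv b \<otimes> y"
proof -
  have b: "b \<in> carrier G" and y: "y \<in> carrier G" and "y \<otimes> b \<otimes> inv y = inv b"
    using assms by (auto simp: dicyclic_rels_def)
  have "y \<otimes> b = (y \<otimes> b \<otimes> inv y) \<otimes> y" using b y by (simp add: m_assoc)
  with \<open>y \<otimes> b \<otimes> inv y = inv b\<close> show ?thesis by simp
qed

lemma (in group) conj_nat_pow:
  assumes "b \<in> carrier G" "y \<in> carrier G" "y \<otimes> b = inv b \<otimes> y"
  shows "y \<otimes> b [^] (n::nat) = inv b [^] n \<otimes> y"
proof (induction n)
  case (Suc n)
  have "y \<otimes> b [^] Suc n = (y \<otimes> b [^] n) \<otimes> b" using assms by (simp add: m_assoc)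
  also have "\<dots> = inv b [^] n \<otimes> (y \<otimes> b)" using Suc assms by (simp add: m_assoc)
  also have "\<dots> = inv b [^] Suc n \<otimes> y" using assms by (simp add: m_assoc)
  finally show ?case .
qed (use assms in simp)

lemma (in group) dicyclic_word_mult:
  assumes rels: "dicyclic_rels G b y q" and "d1 \<le> 1" "d2 \<le> 1"
  shows "(b [^] r1 \<otimes> y [^] d1) \<otimes> (b [^] r2 \<otimes> y [^] d2)
       = b [^] dicyclic_exponent q r1 d1 r2 d2 \<otimes> y [^] ((d1 + d2) mod 2)"
proof -
  have b: "b \<in> carrier G" and y: "y \<in> carrier G" and b_period: "b [^] (2 * q) = \<one>"
    and y_sq: "y \<otimes> y = b [^] int q"
    using rels by (auto simp: dicyclic_rels_def numeral_2_eq_2 int_pow_int)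
  have nat_int: "b [^] n = b [^] int n" for n :: nat by (simp add: int_pow_int)
  have conj: "y \<otimes> b [^] int r2 = inv (b [^] int r2) \<otimes> y"
    using conj_nat_pow[OF b y dicyclic_rels_conj[OF rels]] b by (simp add: nat_pow_inv nat_int)
  then have conj_mult: "y \<otimes> (b [^] int r2 \<otimes> z) = inv (b [^] int r2) \<otimes> (y \<otimes> z)"
    if "z \<in> carrier G" for z
    using b y that by (simp flip: m_assoc)
  have "(b [^] r1 \<otimes> y [^] d1) \<otimes> (b [^] r2 \<otimes> y [^] d2)
      = b [^] (int r1 + (-1) ^ d1 * int r2 + int (q * d1 * d2)) \<otimes> y [^] ((d1 + d2) mod 2)"
  proof -
    have "d1 \<in> {0, 1}" "d2 \<in> {0, 1}" using assms by auto
    then show ?thesis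
      using b y by (elim insertE emptyE)
        (simp_all add: nat_int int_pow_mult int_pow_diff m_assoc conj conj_mult flip: y_sq)
  qed
  also have "\<dots> = b [^] dicyclic_exponent q r1 d1 r2 d2 \<otimes> y [^] ((d1 + d2) mod 2)"
    by (simp only: dicyclic_exponent_def int_pow_mod_period[OF b b_period])
  finally show ?thesis .
qed

lemma (in group) pow_mult_pow_mem_generate:
  assumes "b \<in> carrier G" "y \<in> carrier G"
  shows "b [^] (r::nat) \<otimes> y [^] (d::nat) \<in> generate G {b, y}"
proof -
  interpret S: subgroup "generate G {b, y}" G
    using assms by (intro generate_is_subgroup) auto
  have "b [^] int r \<in> generate G {b, y}" "y [^] int d \<in> generate G {b, y}"
    by (intro subgroup_int_pow_closed S.subgroup_axioms generate.incl; simp)+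
  then show ?thesis by (simp add: int_pow_int)
qed

lemma mem_carrier_Sgp: "m \<in> carrier (Sgp q) \<longleftrightarrow> m < 4 * q"
  and one_Sgp: "\<one>\<^bsub>Sgp q\<^esub> = 0"
  and mult_Sgp: "m \<otimes>\<^bsub>Sgp q\<^esub> n = nat (gp q m n)"
  by (simp_all add: Sgp_def)

locale dicyclic_encoding =
  fixes q :: nat
  assumes q_pos: "0 < q"
begin

lemma Sgp_coordsE:
  assumes "m < 4 * q"
  obtains r d where "r < 2 * q" "d \<le> 1" "m = r + 2 * q * d"
proof
  show "m mod (2 * q) < 2 * q" using q_pos by simp
  show "m div (2 * q) \<le> 1" using less_mult_imp_div_less[of m 2 "2 * q"] assms by simp
qed simp

lemma coords_less_4q: "r < 2 * q \<Longrightarrow> d \<le> 1 \<Longrightarrow> r + 2 * q * d < 4 * q"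
  by (auto simp: le_Suc_eq)

lemma mult_Sgp_coords:
  assumes "r1 < 2 * q" "r2 < 2 * q" "d1 \<le> 1" "d2 \<le> 1"
  shows "(r1 + 2 * q * d1) \<otimes>\<^bsub>Sgp q\<^esub> (r2 + 2 * q * d2)
       = nat (dicyclic_exponent q r1 d1 r2 d2) + 2 * q * ((d1 + d2) mod 2)"
  using gp_coords[OF q_pos assms] dicyclic_exponent_nonneg[OF q_pos]
  by (simp add: mult_Sgp nat_add_distrib nat_mult_distrib)

lemma mult_Sgp_closed: "m < 4 * q \<Longrightarrow> n < 4 * q \<Longrightarrow> m \<otimes>\<^bsub>Sgp q\<^esub> n < 4 * q"
  by (elim Sgp_coordsE)
    (simp add: mult_Sgp_coords coords_less_4q nat_dicyclic_exponent_less[OF q_pos])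

lemma mult_Sgp_assoc:
  assumes "k < 4 * q" "m < 4 * q" "n < 4 * q"
  shows "(k \<otimes>\<^bsub>Sgp q\<^esub> m) \<otimes>\<^bsub>Sgp q\<^esub> n = k \<otimes>\<^bsub>Sgp q\<^esub> (m \<otimes>\<^bsub>Sgp q\<^esub> n)"
proof -
  obtain r1 d1 r2 d2 r3 d3 where coords: "r1 < 2 * q" "r2 < 2 * q" "r3 < 2 * q"
    "d1 \<le> 1" "d2 \<le> 1" "d3 \<le> 1" "k = r1 + 2 * q * d1" "m = r2 + 2 * q * d2" "n = r3 + 2 * q * d3"
    using assms by (elim Sgp_coordsE) blast
  have "((d1 + d2) mod 2 + d3) mod 2 = (d1 + (d2 + d3) mod 2) mod 2"
    by (simp add: mod_simps add.assoc)
  then show ?thesis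
    using coords dicyclic_exponent_assoc[OF q_pos, of d1 d2 d3 r1 r2 r3]
    by (simp add: mult_Sgp_coords nat_dicyclic_exponent_less[OF q_pos])
qed

lemma zero_mult_Sgp: "n < 4 * q \<Longrightarrow> 0 \<otimes>\<^bsub>Sgp q\<^esub> n = n"
  using mult_Sgp_coords[of 0 _ 0] q_pos
  by (elim Sgp_coordsE) (auto simp: dicyclic_exponent_def le_Suc_eq)

lemma Sgp_left_inverse: "n < 4 * q \<Longrightarrow> \<exists>l < 4 * q. l \<otimes>\<^bsub>Sgp q\<^esub> n = 0"
proof (elim Sgp_coordsE)
  fix r d assume coords: "r < 2 * q" "d \<le> 1" "n = r + 2 * q * d"
  \<comment> \<open>the inverse of \<open>a^r x^d\<close> is \<open>a^-r\<close> for \<open>d = 0\<close> and \<open>a^(r+q) x\<close> for \<open>d = 1\<close>\<close>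
  define l where "l = nat ((int (q * d) - (-1) ^ d * int r) mod int (2 * q))"
  have l: "l < 2 * q" using q_pos by (simp add: l_def nat_less_iff)
  have "d \<in> {0, 1}" using coords by auto
  then have "dicyclic_exponent q l d r d = 0"
    using q_pos by (auto simp: l_def dicyclic_exponent_def mod_simps add.assoc)
  then have "(l + 2 * q * d) \<otimes>\<^bsub>Sgp q\<^esub> n = 0"
    using coords l \<open>d \<in> {0, 1}\<close> by (auto simp: mult_Sgp_coords)
  then show ?thesis
    using coords_less_4q[OF l coords(2)] by blast
qed

lemma group_Sgp: "group (Sgp q)"
proof (rule groupI)
  show "\<exists>l \<in> carrier (Sgp q). l \<otimes>\<^bsub>Sgp q\<^esub> n = \<one>\<^bsub>Sgp q\<^esub>" if "n \<in> carrier (Sgp q)" for n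
    using Sgp_left_inverse that by (force simp: mem_carrier_Sgp one_Sgp)
qed (use q_pos in
    \<open>simp_all add: mem_carrier_Sgp one_Sgp mult_Sgp_closed mult_Sgp_assoc zero_mult_Sgp\<close>)

interpretation Sgp: group "Sgp q"
  by (rule group_Sgp)

lemma mult_zero_Sgp: "n < 4 * q \<Longrightarrow> n \<otimes>\<^bsub>Sgp q\<^esub> 0 = n"
  using Sgp.r_one[of n] by (simp add: mem_carrier_Sgp one_Sgp)

lemma nat_pow_one_Sgp: "(1::nat) [^]\<^bsub>Sgp q\<^esub> (k::nat) = k mod (2 * q)"
proof (induction k)
  case (Suc k)
  have "(int (k mod (2 * q)) + 1) mod int (2 * q) = int (Suc k mod (2 * q))"
    by (simp add: zmod_int mod_simps add.commute)
  then show ?case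
    using Suc mult_Sgp_coords[of "k mod (2 * q)" 1 0 0] q_pos
    by (simp add: dicyclic_exponent_def)
qed (simp add: one_Sgp)

lemma mult_two_q: "r < 2 * q \<Longrightarrow> r \<otimes>\<^bsub>Sgp q\<^esub> (2 * q) = r + 2 * q"
  using mult_Sgp_coords[of r 0 0 1] q_pos by (simp add: dicyclic_exponent_def)

lemma two_q_mult_one: "(2 * q) \<otimes>\<^bsub>Sgp q\<^esub> 1 = (2 * q - 1) + 2 * q"
proof -
  have "(-1::int) mod (2 * int q) = int (2 * q - 1)"
    using q_pos by (simp add: zmod_minus1 of_nat_diff)
  then show ?thesis
    using mult_Sgp_coords[of 0 1 1 0] q_pos by (simp add: dicyclic_exponent_def)
qed

lemma gen_a_mult_two_q: "1 \<otimes>\<^bsub>Sgp q\<^esub> (2 * q) = 1 + 2 * q"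
  using mult_two_q[of 1] q_pos by simp

lemma inv_one_Sgp: "inv\<^bsub>Sgp q\<^esub> 1 = 2 * q - 1"
proof (rule Sgp.inv_equality)
  have "(int (2 * q - 1) + 1) mod int (2 * q) = 0"
    using q_pos by (simp add: of_nat_diff)
  then show "(2 * q - 1) \<otimes>\<^bsub>Sgp q\<^esub> 1 = \<one>\<^bsub>Sgp q\<^esub>"
    using mult_Sgp_coords[of "2 * q - 1" 1 0 0] q_pos by (simp add: dicyclic_exponent_def one_Sgp)
qed (use q_pos in \<open>auto simp: mem_carrier_Sgp\<close>)

lemma Sgp_normal_form:
  assumes "r < 2 * q" "d \<le> 1"
  shows "(1::nat) [^]\<^bsub>Sgp q\<^esub> r \<otimes>\<^bsub>Sgp q\<^esub> (2 * q) [^]\<^bsub>Sgp q\<^esub> d = r + 2 * q * d"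
proof -
  have "d = 0 \<or> d = 1" using assms(2) by auto
  \<comment> \<open>\<open>One_nat_def\<close> is a simp rule and would turn the generator \<open>1\<close> into \<open>Suc 0\<close>\<close>
  then show ?thesis
    using assms(1) q_pos
    by (elim disjE)
      (simp_all add: one_Sgp mem_carrier_Sgp nat_pow_one_Sgp mult_zero_Sgp mult_two_q del: One_nat_def)
qed

lemma dicyclic_rels_Sgp: "dicyclic_rels (Sgp q) 1 (2 * q) q"
proof -
  have gens: "1 \<in> carrier (Sgp q)" "2 * q \<in> carrier (Sgp q)"
    using q_pos by (auto simp: mem_carrier_Sgp)
  have "(2 * q) [^]\<^bsub>Sgp q\<^esub> (2::nat) = (2 * q) \<otimes>\<^bsub>Sgp q\<^esub> (2 * q)"
    using gens by (simp add: numeral_2_eq_2)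
  also have "\<dots> = q"
    using mult_Sgp_coords[of 0 0 1 1] q_pos by (simp add: dicyclic_exponent_def)
  finally have x_sq: "(2 * q) [^]\<^bsub>Sgp q\<^esub> (2::nat) = (1::nat) [^]\<^bsub>Sgp q\<^esub> q"
    using q_pos by (simp add: nat_pow_one_Sgp del: One_nat_def)
  have "(2 * q) \<otimes>\<^bsub>Sgp q\<^esub> 1 = inv\<^bsub>Sgp q\<^esub> 1 \<otimes>\<^bsub>Sgp q\<^esub> (2 * q)"
    using q_pos by (simp add: two_q_mult_one inv_one_Sgp mult_two_q del: One_nat_def)
  then have "(2 * q) \<otimes>\<^bsub>Sgp q\<^esub> 1 \<otimes>\<^bsub>Sgp q\<^esub> inv\<^bsub>Sgp q\<^esub> (2 * q) = inv\<^bsub>Sgp q\<^esub> 1"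
    using gens by (simp add: Sgp.m_assoc del: One_nat_def)
  then show ?thesis
    using gens x_sq by (simp add: dicyclic_rels_def nat_pow_one_Sgp one_Sgp del: One_nat_def)
qed

lemma generate_Sgp: "generate (Sgp q) {1, 2 * q} = carrier (Sgp q)"
proof
  show "generate (Sgp q) {1, 2 * q} \<subseteq> carrier (Sgp q)"
    using q_pos by (intro Sgp.generate_incl) (auto simp: mem_carrier_Sgp)
  show "carrier (Sgp q) \<subseteq> generate (Sgp q) {1, 2 * q}"
  proof
    fix m assume "m \<in> carrier (Sgp q)"
    then obtain r d where "r < 2 * q" "d \<le> 1" "m = r + 2 * q * d"
      by (auto simp: mem_carrier_Sgp elim: Sgp_coordsE)
    then show "m \<in> generate (Sgp q) {1, 2 * q}"
      using Sgp.pow_mult_pow_mem_generate[of 1 "2 * q" r d] q_pos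
      by (simp add: Sgp_normal_form mem_carrier_Sgp del: One_nat_def)
  qed
qed

lemma Sgp_not_comm: "2 \<le> q \<Longrightarrow> \<not> comm_group (Sgp q)"
proof
  assume "2 \<le> q" "comm_group (Sgp q)"
  interpret comm_group "Sgp q" by fact
  have "1 \<otimes>\<^bsub>Sgp q\<^esub> (2 * q) = (2 * q) \<otimes>\<^bsub>Sgp q\<^esub> 1"
    using \<open>2 \<le> q\<close> by (intro m_comm) (auto simp: mem_carrier_Sgp)
  with \<open>2 \<le> q\<close> show False
    by (simp add: two_q_mult_one gen_a_mult_two_q del: One_nat_def)
qed

lemma Sgp_universal:
  assumes "group H" and rels: "dicyclic_rels H b y q"
  shows "\<exists>h \<in> hom (Sgp q) H. h 1 = b \<and> h (2 * q) = y"
proof -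
  interpret H: group H by fact
  have b: "b \<in> carrier H" and y: "y \<in> carrier H"
    using rels by (auto simp: dicyclic_rels_def)
  define h where "h m = b [^]\<^bsub>H\<^esub> (m mod (2 * q)) \<otimes>\<^bsub>H\<^esub> y [^]\<^bsub>H\<^esub> (m div (2 * q))" for m
  have h_coords: "h (r + 2 * q * d) = b [^]\<^bsub>H\<^esub> r \<otimes>\<^bsub>H\<^esub> y [^]\<^bsub>H\<^esub> d" if "r < 2 * q" for r d
    using that by (simp add: h_def)
  have "h \<in> hom (Sgp q) H"
  proof (rule homI)
    show "h m \<in> carrier H" for m
      using b y by (simp add: h_def)
    fix m n assume "m \<in> carrier (Sgp q)" "n \<in> carrier (Sgp q)"
    then obtain r1 d1 r2 d2 where coords: "r1 < 2 * q" "r2 < 2 * q" "d1 \<le> 1" "d2 \<le> 1"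
      "m = r1 + 2 * q * d1" "n = r2 + 2 * q * d2"
      by (auto simp: mem_carrier_Sgp elim!: Sgp_coordsE)
    have "h (m \<otimes>\<^bsub>Sgp q\<^esub> n)
        = b [^]\<^bsub>H\<^esub> nat (dicyclic_exponent q r1 d1 r2 d2) \<otimes>\<^bsub>H\<^esub> y [^]\<^bsub>H\<^esub> ((d1 + d2) mod 2)"
      using coords by (simp add: mult_Sgp_coords h_coords nat_dicyclic_exponent_less[OF q_pos])
    also have "\<dots> = b [^]\<^bsub>H\<^esub> dicyclic_exponent q r1 d1 r2 d2 \<otimes>\<^bsub>H\<^esub> y [^]\<^bsub>H\<^esub> ((d1 + d2) mod 2)"
      using dicyclic_exponent_nonneg[OF q_pos] by (simp flip: int_pow_int)
    also have "\<dots> = h m \<otimes>\<^bsub>H\<^esub> h n"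
      using coords by (simp add: h_coords H.dicyclic_word_mult[OF rels])
    finally show "h (m \<otimes>\<^bsub>Sgp q\<^esub> n) = h m \<otimes>\<^bsub>H\<^esub> h n" .
  qed
  moreover have "h 1 = b" "h (2 * q) = y"
    using h_coords[of 1 0] h_coords[of 0 1] q_pos b y by simp_all
  ultimately show ?thesis by blast
qed

end

theorem mainTheorem6:
  fixes q :: nat
  assumes "q \<ge> 1"
  shows "group (Sgp q) \<and> order (Sgp q) = 4 * q \<and>
    (\<exists>a x. dicyclic_rels (Sgp q) a x q \<and>
       generate (Sgp q) {a, x} = carrier (Sgp q) \<and>
       (\<forall>(H :: ('c, 'd) monoid_scheme) b y. group H \<and> dicyclic_rels H b y q \<longrightarrow>
          (\<exists>h \<in> hom (Sgp q) H. h a = b \<and> h x = y))) \<and>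
    (q \<ge> 2 \<longrightarrow> \<not> comm_group (Sgp q))"
proof -
  interpret dicyclic_encoding q
    using assms by unfold_locales simp
  have universal: "\<forall>(H :: ('c, 'd) monoid_scheme) b y. group H \<and> dicyclic_rels H b y q \<longrightarrow>
      (\<exists>h \<in> hom (Sgp q) H. h 1 = b \<and> h (2 * q) = y)"
    by (intro allI impI) (elim conjE, rule Sgp_universal)
  show ?thesis
  proof (intro conjI impI)
    show "order (Sgp q) = 4 * q"
      by (simp add: order_def Sgp_def)
  qed (use group_Sgp dicyclic_rels_Sgp generate_Sgp universal Sgp_not_comm in blast)+
qed

end
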